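(* Let $2\le n\le m$ be integers and let $T_{n,m}=C_n\,\Box\, C_m$. Then $T_{n,m}$ is a connected highly-regular graph, and it is not distance-regular unless $(n,m)\in\{(2,2),(2,4),(3,3),(4,4)\}$.
   Context: For $n\ge3$, $C_n$ is the cycle graph on $n$ vertices; $C_2$ denotes the graph with two vertices joined by a single edge. The Cartesian product $\Gamma_1\Box\Gamma_2$ has vertex set $V(\Gamma_1)\times V(\Gamma_2)$, with $(u_1,v_1)\sim(u_2,v_2)$ iff ($u_1=u_2$ and $v_1\sim v_2$) or ($v_1=v_2$ and $u_1\sim u_2$). A graph $\Gamma$ of order $N$ is highly-regular with collapsed adjacency matrix $C=[c_{i,j}]_{1\le i,j\le M}$, where $2\le M<N$ (the value $M=N$ allowed only when $N=2$), if for every vertex $u$ there is a partition of $V(\Gamma)$ into nonempty sets $V_1(u)=\{u\},\dots,V_M(u)$ such that every $y\in V_j(u)$ is adjacent to exactly $c_{i,j}$ vertices of $V_i(u)$. A connected graph is distance-regular if for all $u,v$ the numbers $|D_1(v)\cap D_{i-1}(u)|$, $|D_1(v)\cap D_i(u)|$, $|D_1(v)\cap D_{i+1}(u)|$ depend only on $i=d(u,v)$, where $D_i(u)=\{v:d(u,v)=i\}$. *)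

theory Defs
  imports Main
begin

text \<open>A (simple) graph is given by a vertex set V and a symmetric, irreflexive
adjacency relation E.\<close>

definition cycle_adj :: "nat \<Rightarrow> nat \<Rightarrow> nat \<Rightarrow> bool" where
  "cycle_adj n i j \<longleftrightarrow> i < n \<and> j < n \<and> i \<noteq> j \<and>
     (j = (i + 1) mod n \<or> i = (j + 1) mod n)"

definition cycle_verts :: "nat \<Rightarrow> nat set" where
  "cycle_verts n = {..<n}"

definition box_verts :: "'a set \<Rightarrow> 'b set \<Rightarrow> ('a \<times> 'b) set" where
  "box_verts V1 V2 = V1 \<times> V2"

definition box_adj :: "('a \<Rightarrow> 'a \<Rightarrow> bool) \<Rightarrow> ('b \<Rightarrow> 'b \<Rightarrow> bool) \<Rightarrow>
    ('a \<times> 'b) \<Rightarrow> ('a \<times> 'b) \<Rightarrow> bool" where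
  "box_adj E1 E2 p q \<longleftrightarrow>
     (fst p = fst q \<and> E2 (snd p) (snd q)) \<or> (snd p = snd q \<and> E1 (fst p) (fst q))"

definition torus_verts :: "nat \<Rightarrow> nat \<Rightarrow> (nat \<times> nat) set" where
  "torus_verts n m = box_verts (cycle_verts n) (cycle_verts m)"

definition torus_adj :: "nat \<Rightarrow> nat \<Rightarrow> (nat \<times> nat) \<Rightarrow> (nat \<times> nat) \<Rightarrow> bool" where
  "torus_adj n m = box_adj (cycle_adj n) (cycle_adj m)"

definition is_walk :: "'a set \<Rightarrow> ('a \<Rightarrow> 'a \<Rightarrow> bool) \<Rightarrow> 'a list \<Rightarrow> bool" where
  "is_walk V E xs \<longleftrightarrow> xs \<noteq> [] \<and> set xs \<subseteq> V \<and>
     (\<forall>i. Suc i < length xs \<longrightarrow> E (xs ! i) (xs ! Suc i))"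

definition reachable :: "'a set \<Rightarrow> ('a \<Rightarrow> 'a \<Rightarrow> bool) \<Rightarrow> 'a \<Rightarrow> 'a \<Rightarrow> bool" where
  "reachable V E u v \<longleftrightarrow> (\<exists>xs. is_walk V E xs \<and> hd xs = u \<and> last xs = v)"

definition connected_graph :: "'a set \<Rightarrow> ('a \<Rightarrow> 'a \<Rightarrow> bool) \<Rightarrow> bool" where
  "connected_graph V E \<longleftrightarrow> V \<noteq> {} \<and> (\<forall>u\<in>V. \<forall>v\<in>V. reachable V E u v)"

definition gdist :: "'a set \<Rightarrow> ('a \<Rightarrow> 'a \<Rightarrow> bool) \<Rightarrow> 'a \<Rightarrow> 'a \<Rightarrow> nat" where
  "gdist V E u v = (LEAST k. \<exists>xs. is_walk V E xs \<and> hd xs = u \<and> last xs = v \<and> length xs = Suc k)"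

text \<open>Highly-regular with some collapsed adjacency matrix C = [c i j], 1 \<le> i,j \<le> M.\<close>
definition highly_regular :: "'a set \<Rightarrow> ('a \<Rightarrow> 'a \<Rightarrow> bool) \<Rightarrow> bool" where
  "highly_regular V E \<longleftrightarrow> finite V \<and>
     (\<exists>(M::nat) (c::nat \<Rightarrow> nat \<Rightarrow> nat).
        2 \<le> M \<and> (M < card V \<or> (M = card V \<and> card V = 2)) \<and>
        (\<forall>u\<in>V. \<exists>P :: nat \<Rightarrow> 'a set.
            P 1 = {u} \<and>
            (\<forall>i\<in>{1..M}. P i \<noteq> {} \<and> P i \<subseteq> V) \<and>
            (\<forall>i\<in>{1..M}. \<forall>j\<in>{1..M}. i \<noteq> j \<longrightarrow> P i \<inter> P j = {}) \<and>
            (\<Union>i\<in>{1..M}. P i) = V \<and>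
            (\<forall>i\<in>{1..M}. \<forall>j\<in>{1..M}. \<forall>y\<in>P j. card {x \<in> P i. E y x} = c i j)))"

definition distance_regular :: "'a set \<Rightarrow> ('a \<Rightarrow> 'a \<Rightarrow> bool) \<Rightarrow> bool" where
  "distance_regular V E \<longleftrightarrow> connected_graph V E \<and>
     (\<forall>u\<in>V. \<forall>v\<in>V. \<forall>u'\<in>V. \<forall>v'\<in>V. gdist V E u v = gdist V E u' v' \<longrightarrow>
        card {w\<in>V. E v w \<and> gdist V E u w + 1 = gdist V E u v}
          = card {w\<in>V. E v' w \<and> gdist V E u' w + 1 = gdist V E u' v'} \<and>
        card {w\<in>V. E v w \<and> gdist V E u w = gdist V E u v}
          = card {w\<in>V. E v' w \<and> gdist V E u' w = gdist V E u' v'} \<and>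
        card {w\<in>V. E v w \<and> gdist V E u w = gdist V E u v + 1}
          = card {w\<in>V. E v' w \<and> gdist V E u' w = gdist V E u' v' + 1})"

end

theory Submission
  imports Defs
begin

text \<open>The graph distance of T(n,m) = C_n \<box> C_m is the sum of the two cyclic distances. Labelling
  each vertex by the pair of its cyclic distances from a base vertex u gives an equitable
  partition: rotations and reflections of the two cycles act on the torus by automorphisms,
  and they carry any vertex to any other vertex with the same pair of distances from u and
  (0,0) respectively, so the neighbour counts between cells do not depend on u or on the
  chosen vertex. There are (n div 2 + 1)(m div 2 + 1) < nm cells unless n = m = 2; in that
  case T(2,2) = C_4 and the distance partition does the job, the coordinate swap being the
  extra automorphism needed.

  For m \<ge> 5 the vertices (0,2) and (1,1) are both at distance 2 from (0,0) but have one
  and two neighbours at distance 1 from (0,0). In T(2,3) and T(3,4), exactly one of the two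
  neighbours (1,0), (0,1) of (0,0) lies on a triangle through (0,0). This leaves only the
  four exceptional pairs.\<close>

section \<open>Automorphisms and equitable partitions\<close>

definition graph_aut :: "'a set \<Rightarrow> ('a \<Rightarrow> 'a \<Rightarrow> bool) \<Rightarrow> ('a \<Rightarrow> 'a) \<Rightarrow> bool" where
  "graph_aut V E s \<longleftrightarrow> bij_betw s V V \<and> (\<forall>p\<in>V. \<forall>q\<in>V. E (s p) (s q) \<longleftrightarrow> E p q)"

lemma graph_aut_apply: "graph_aut V E s \<Longrightarrow> x \<in> V \<Longrightarrow> s x \<in> V"
  unfolding graph_aut_def by (auto simp: bij_betw_def)

lemma graph_aut_comp: "graph_aut V E s \<Longrightarrow> graph_aut V E t \<Longrightarrow> graph_aut V E (s \<circ> t)"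
  unfolding graph_aut_def by (auto intro: bij_betw_trans simp: bij_betw_apply)

lemma card_neighbours_graph_aut:
  assumes s: "graph_aut V E s" and "y \<in> V" "P \<subseteq> V" "Q \<subseteq> V"
    and PQ: "\<And>x. x \<in> V \<Longrightarrow> s x \<in> Q \<longleftrightarrow> x \<in> P"
  shows "card {x \<in> Q. E (s y) x} = card {x \<in> P. E y x}"
proof -
  have bij: "bij_betw s V V" and adj: "\<And>p q. p \<in> V \<Longrightarrow> q \<in> V \<Longrightarrow> E (s p) (s q) \<longleftrightarrow> E p q"
    using s unfolding graph_aut_def by auto
  have "{x \<in> Q. E (s y) x} = s ` {x \<in> P. E y x}"
  proof (intro equalityI subsetI)
    fix z assume z: "z \<in> {x \<in> Q. E (s y) x}"
    then obtain x where "x \<in> V" "z = s x"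
      using bij \<open>Q \<subseteq> V\<close> by (metis (no_types, lifting) bij_betw_imp_surj_on imageE mem_Collect_eq subsetD)
    then show "z \<in> s ` {x \<in> P. E y x}" using z PQ adj \<open>y \<in> V\<close> by auto
  qed (use PQ adj \<open>y \<in> V\<close> \<open>P \<subseteq> V\<close> in auto)
  moreover have "inj_on s {x \<in> P. E y x}"
    using bij \<open>P \<subseteq> V\<close> by (auto simp: bij_betw_def intro: inj_on_subset)
  ultimately show ?thesis by (simp add: card_image)
qed

lemma highly_regular_by_labelling:
  fixes lab :: "'a \<Rightarrow> 'a \<Rightarrow> nat"
  assumes "finite V" "2 \<le> M" "M < card V" "w \<in> V"
    and lab_range: "\<And>u. u \<in> V \<Longrightarrow> lab u ` V = {1..M}"
    and lab_one: "\<And>u x. u \<in> V \<Longrightarrow> x \<in> V \<Longrightarrow> lab u x = 1 \<longleftrightarrow> x = u"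
    and aut: "\<And>u y y0. u \<in> V \<Longrightarrow> y \<in> V \<Longrightarrow> y0 \<in> V \<Longrightarrow> lab u y = lab w y0 \<Longrightarrow>
       \<exists>s. graph_aut V E s \<and> s y = y0 \<and> (\<forall>x\<in>V. lab w (s x) = lab u x)"
  shows "highly_regular V E"
proof -
  define P where "P u i = {x \<in> V. lab u x = i}" for u i
  define y0 where "y0 j = (SOME y. y \<in> P w j)" for j
  define c where "c i j = card {x \<in> P w i. E (y0 j) x}" for i j
  have P_nonempty: "P u i \<noteq> {}" if "u \<in> V" "i \<in> {1..M}" for u i
  proof -
    have "i \<in> lab u ` V" using lab_range[OF that(1)] that(2) by simp
    then show ?thesis unfolding P_def by blast
  qed
  have equitable: "card {x \<in> P u i. E y x} = c i j" if u: "u \<in> V" and y: "y \<in> P u j"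
    and j: "j \<in> {1..M}" for u i j y
  proof -
    have y0: "y0 j \<in> P w j"
      unfolding y0_def using P_nonempty[OF \<open>w \<in> V\<close> j] by (simp add: some_in_eq)
    obtain s where s: "graph_aut V E s" "s y = y0 j" "\<forall>x\<in>V. lab w (s x) = lab u x"
      using aut[OF u, of y "y0 j"] y y0 by (auto simp: P_def)
    have "card {x \<in> P w i. E (s y) x} = card {x \<in> P u i. E y x}"
      using y s by (intro card_neighbours_graph_aut) (auto simp: P_def graph_aut_apply)
    then show ?thesis using s(2) by (simp add: c_def)
  qed
  have "\<exists>P. P 1 = {u} \<and> (\<forall>i\<in>{1..M}. P i \<noteq> {} \<and> P i \<subseteq> V) \<and>
      (\<forall>i\<in>{1..M}. \<forall>j\<in>{1..M}. i \<noteq> j \<longrightarrow> P i \<inter> P j = {}) \<and> (\<Union>i\<in>{1..M}. P i) = V \<and>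
      (\<forall>i\<in>{1..M}. \<forall>j\<in>{1..M}. \<forall>y\<in>P j. card {x \<in> P i. E y x} = c i j)" if u: "u \<in> V" for u
  proof (intro exI[of _ "P u"] conjI ballI impI)
    show "P u 1 = {u}" using lab_one[OF u] u by (auto simp: P_def)
    show "(\<Union>i\<in>{1..M}. P u i) = V" using lab_range[OF u] by (auto simp: P_def)
  next
    fix i assume "i \<in> {1..M}"
    then show "P u i \<noteq> {}" using P_nonempty[OF u] by blast
    show "P u i \<subseteq> V" by (auto simp: P_def)
  next
    fix i j :: nat assume "i \<noteq> j"
    then show "P u i \<inter> P u j = {}" by (auto simp: P_def)
  next
    fix i j y assume "j \<in> {1..M}" "y \<in> P u j"
    then show "card {x \<in> P u i. E y x} = c i j" using equitable[OF u] by blast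
  qed
  then show ?thesis
    unfolding highly_regular_def using assms(1-3) by blast
qed

section \<open>Graph distance from a potential\<close>

lemma is_walk_Cons2: "is_walk V E (x # y # xs) \<longleftrightarrow> x \<in> V \<and> E x y \<and> is_walk V E (y # xs)"
  unfolding is_walk_def
proof safe
  fix i assume "\<forall>i. Suc i < length (x # y # xs) \<longrightarrow> E ((x # y # xs) ! i) ((x # y # xs) ! Suc i)"
    "Suc i < length (y # xs)"
  then show "E ((y # xs) ! i) ((y # xs) ! Suc i)" by (metis length_Cons nth_Cons_Suc Suc_less_eq)
next
  fix i assume "E x y" "\<forall>i. Suc i < length (y # xs) \<longrightarrow> E ((y # xs) ! i) ((y # xs) ! Suc i)"
    "Suc i < length (x # y # xs)"
  then show "E ((x # y # xs) ! i) ((x # y # xs) ! Suc i)" by (cases i) auto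
qed auto

lemma potential_drop_le_walk_length:
  fixes h :: "'a \<Rightarrow> nat"
  assumes lipschitz: "\<And>p q. p \<in> V \<Longrightarrow> q \<in> V \<Longrightarrow> E p q \<Longrightarrow> h p \<le> h q + 1"
    and "is_walk V E xs"
  shows "h (hd xs) \<le> h (last xs) + (length xs - 1)"
  using assms(2)
proof (induction xs rule: induct_list012)
  case (3 x y zs)
  then have "x \<in> V" "y \<in> V" "E x y" "is_walk V E (y # zs)"
    by (auto simp: is_walk_Cons2 is_walk_def)
  then have "h y \<le> h (last (y # zs)) + length zs" using "3.IH"(2) by simp
  moreover have "h x \<le> h y + 1" using lipschitz \<open>x \<in> V\<close> \<open>y \<in> V\<close> \<open>E x y\<close> .
  ultimately show ?case by simp
qed (auto simp: is_walk_def)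

lemma walk_down_potential:
  fixes h :: "'a \<Rightarrow> nat"
  assumes descent: "\<And>x. x \<in> V \<Longrightarrow> 0 < h x \<Longrightarrow> \<exists>y\<in>V. E x y \<and> h y + 1 = h x"
    and zero: "\<And>x. x \<in> V \<Longrightarrow> h x = 0 \<Longrightarrow> x = c"
    and "x \<in> V"
  shows "\<exists>xs. is_walk V E xs \<and> hd xs = x \<and> last xs = c \<and> length xs = Suc (h x)"
  using \<open>x \<in> V\<close>
proof (induction "h x" arbitrary: x)
  case 0
  then show ?case using zero by (intro exI[of _ "[x]"]) (auto simp: is_walk_def)
next
  case (Suc k)
  then obtain y where y: "y \<in> V" "E x y" "h y + 1 = h x"
    using descent[of x] by (metis zero_less_Suc)
  then have "h y = k" using Suc.hyps(2) by simp
  then obtain ys where ys: "is_walk V E ys" "hd ys = y" "last ys = c" "length ys = Suc k"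
    using Suc.hyps(1)[of y] \<open>h y = k\<close> \<open>y \<in> V\<close> by metis
  then obtain zs where "ys = y # zs" by (cases ys) auto
  with ys y Suc show ?case by (intro exI[of _ "x # ys"]) (auto simp: is_walk_Cons2)
qed

lemma gdist_eq_potential:
  fixes h :: "'a \<Rightarrow> nat"
  assumes lipschitz: "\<And>p q. p \<in> V \<Longrightarrow> q \<in> V \<Longrightarrow> E p q \<Longrightarrow> h p \<le> h q + 1"
    and descent: "\<And>x. x \<in> V \<Longrightarrow> 0 < h x \<Longrightarrow> \<exists>y\<in>V. E x y \<and> h y + 1 = h x"
    and zero: "\<And>x. x \<in> V \<Longrightarrow> h x = 0 \<longleftrightarrow> x = c"
    and "c \<in> V" "u \<in> V"
  shows "gdist V E u c = h u"
  unfolding gdist_def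
proof (rule Least_equality)
  show "\<exists>xs. is_walk V E xs \<and> hd xs = u \<and> last xs = c \<and> length xs = Suc (h u)"
    using walk_down_potential[OF descent _ \<open>u \<in> V\<close>, of c] zero by blast
next
  fix k assume "\<exists>xs. is_walk V E xs \<and> hd xs = u \<and> last xs = c \<and> length xs = Suc k"
  then obtain xs where "is_walk V E xs" "hd xs = u" "last xs = c" "length xs = Suc k" by blast
  then show "h u \<le> k"
    using potential_drop_le_walk_length[where h = h and V = V and E = E and xs = xs, OF lipschitz]
      zero[OF \<open>c \<in> V\<close>] by simp
qed

section \<open>Cycles\<close>

definition cycle_succ :: "nat \<Rightarrow> nat \<Rightarrow> nat" where
  "cycle_succ n i = (if i + 1 = n then 0 else i + 1)"

definition cycle_pred :: "nat \<Rightarrow> nat \<Rightarrow> nat" where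
  "cycle_pred n i = (if i = 0 then n - 1 else i - 1)"

lemma cycle_adj_iff:
  "cycle_adj n i j \<longleftrightarrow> i < n \<and> j < n \<and> i \<noteq> j \<and> (j = cycle_succ n i \<or> i = cycle_succ n j)"
  unfolding cycle_adj_def cycle_succ_def by (auto simp: mod_if)

definition cycle_dist :: "nat \<Rightarrow> nat \<Rightarrow> nat \<Rightarrow> nat" where
  "cycle_dist n i j = (let d = if i \<le> j then j - i else i - j in min d (n - d))"

lemma cycle_dist_commute: "cycle_dist n i j = cycle_dist n j i"
  unfolding cycle_dist_def by (auto simp: Let_def)

lemma cycle_dist_self [simp]: "cycle_dist n i i = 0"
  by (simp add: cycle_dist_def)

lemma cycle_dist_eq_0_iff: "i < n \<Longrightarrow> j < n \<Longrightarrow> cycle_dist n i j = 0 \<longleftrightarrow> i = j"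
  unfolding cycle_dist_def by (auto simp: Let_def min_def)

lemma cycle_dist_le_half: "i < n \<Longrightarrow> j < n \<Longrightarrow> cycle_dist n i j \<le> n div 2"
  unfolding cycle_dist_def by (auto simp: Let_def min_def)

lemma cycle_dist_short_arc: "i \<le> j \<Longrightarrow> 2 * (j - i) \<le> n \<Longrightarrow> cycle_dist n i j = j - i"
  unfolding cycle_dist_def by (simp add: Let_def)

lemma cycle_dist_long_arc: "i \<le> j \<Longrightarrow> n \<le> 2 * (j - i) \<Longrightarrow> cycle_dist n i j = n - (j - i)"
  unfolding cycle_dist_def by (simp add: Let_def)

lemma cycle_dist_succ_le:
  assumes "i < n" "j < n"
  shows "cycle_dist n i j \<le> cycle_dist n i (cycle_succ n j) + 1 \<and>
         cycle_dist n i (cycle_succ n j) \<le> cycle_dist n i j + 1"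
proof (cases "j + 1 = n")
  case True
  then have "n = j + 1" by simp
  then show ?thesis using assms by (auto simp: cycle_succ_def cycle_dist_def Let_def min_def)
next
  case False
  then show ?thesis
    using assms by (cases "i \<le> j") (auto simp: cycle_succ_def cycle_dist_def Let_def min_def)
qed

lemma cycle_dist_adj_le: "cycle_adj n j k \<Longrightarrow> i < n \<Longrightarrow> cycle_dist n i j \<le> cycle_dist n i k + 1"
  unfolding cycle_adj_iff using cycle_dist_succ_le by metis

lemma cycle_dist_step_towards_of_less:
  assumes "i < j" "j < n"
  shows "cycle_dist n i (cycle_succ n j) + 1 = cycle_dist n i j \<or>
         cycle_dist n i (cycle_pred n j) + 1 = cycle_dist n i j"
proof (cases "2 * (j - i) \<le> n")
  case True
  then have "cycle_dist n i (j - 1) = j - 1 - i" "cycle_dist n i j = j - i"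
    using assms by (simp_all add: cycle_dist_short_arc)
  then show ?thesis using assms by (intro disjI2) (simp add: cycle_pred_def)
next
  case long: False
  show ?thesis
  proof (cases "j + 1 = n")
    case True
    then have "cycle_dist n 0 i = i" "cycle_dist n i j = n - (j - i)"
      using assms long by (simp_all add: cycle_dist_short_arc cycle_dist_long_arc)
    then show ?thesis using True assms by (intro disjI1) (simp add: cycle_succ_def cycle_dist_commute)
  next
    case False
    then have "cycle_dist n i (j + 1) = n - (j + 1 - i)" "cycle_dist n i j = n - (j - i)"
      using assms long by (simp_all add: cycle_dist_long_arc)
    then show ?thesis using False assms by (intro disjI1) (simp add: cycle_succ_def)
  qed
qed

lemma cycle_dist_step_towards_of_greater:
  assumes "j < i" "i < n"
  shows "cycle_dist n i (cycle_succ n j) + 1 = cycle_dist n i j \<or>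
         cycle_dist n i (cycle_pred n j) + 1 = cycle_dist n i j"
proof (cases "2 * (i - j) < n")
  case True
  then have "cycle_dist n (j + 1) i = i - (j + 1)" "cycle_dist n j i = i - j"
    using assms by (simp_all add: cycle_dist_short_arc)
  then show ?thesis using assms by (intro disjI1) (simp add: cycle_succ_def cycle_dist_commute)
next
  case long: False
  show ?thesis
  proof (cases "j = 0")
    case True
    then have "cycle_dist n i (n - 1) = n - 1 - i" "cycle_dist n j i = n - (i - j)"
      using assms long by (simp_all add: cycle_dist_short_arc cycle_dist_long_arc)
    then show ?thesis using True assms by (intro disjI2) (simp add: cycle_pred_def cycle_dist_commute)
  next
    case False
    then have "cycle_dist n (j - 1) i = n - (i - (j - 1))" "cycle_dist n j i = n - (i - j)"
      using assms long by (simp_all add: cycle_dist_long_arc)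
    then show ?thesis using False assms by (intro disjI2) (simp add: cycle_pred_def cycle_dist_commute)
  qed
qed

lemma cycle_dist_descent:
  assumes "2 \<le> n" "i < n" "j < n" "i \<noteq> j"
  shows "\<exists>k<n. cycle_adj n j k \<and> cycle_dist n i k + 1 = cycle_dist n i j"
proof -
  have "cycle_adj n j (cycle_succ n j)" "cycle_adj n j (cycle_pred n j)"
    "cycle_succ n j < n" "cycle_pred n j < n"
    using assms unfolding cycle_adj_iff cycle_succ_def cycle_pred_def by auto
  moreover have "cycle_dist n i (cycle_succ n j) + 1 = cycle_dist n i j \<or>
      cycle_dist n i (cycle_pred n j) + 1 = cycle_dist n i j"
    using assms cycle_dist_step_towards_of_less cycle_dist_step_towards_of_greater
    by (cases "i < j") auto
  ultimately show ?thesis by blast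
qed

lemma graph_aut_cycleI:
  assumes bij: "bij_betw f {..<n} {..<n}"
    and succ: "(\<forall>x<n. f (cycle_succ n x) = cycle_succ n (f x)) \<or>
               (\<forall>x<n. cycle_succ n (f (cycle_succ n x)) = f x)"
  shows "graph_aut (cycle_verts n) (cycle_adj n) f"
proof -
  have f: "\<And>x. x < n \<Longrightarrow> f x < n" and inj: "\<And>x y. x < n \<Longrightarrow> y < n \<Longrightarrow> f x = f y \<longleftrightarrow> x = y"
    using bij by (auto simp: bij_betw_def inj_on_def)
  have succ_lt: "\<And>x. x < n \<Longrightarrow> cycle_succ n x < n" by (auto simp: cycle_succ_def)
  have succ_inj: "\<And>x y. x < n \<Longrightarrow> y < n \<Longrightarrow> cycle_succ n x = cycle_succ n y \<longleftrightarrow> x = y"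
    by (auto simp: cycle_succ_def)
  have "cycle_adj n (f p) (f q) \<longleftrightarrow> cycle_adj n p q" if p: "p < n" and q: "q < n" for p q
  proof -
    have "f q = cycle_succ n (f p) \<longleftrightarrow> q = cycle_succ n p" "f p = cycle_succ n (f q) \<longleftrightarrow> p = cycle_succ n q"
      if "\<forall>x<n. f (cycle_succ n x) = cycle_succ n (f x)"
      using that p q inj succ_lt by (metis)+
    moreover have "f p = cycle_succ n (f q) \<longleftrightarrow> q = cycle_succ n p" "f q = cycle_succ n (f p) \<longleftrightarrow> p = cycle_succ n q"
      if anti: "\<forall>x<n. cycle_succ n (f (cycle_succ n x)) = f x"
    proof -
      show "f p = cycle_succ n (f q) \<longleftrightarrow> q = cycle_succ n p"
        using anti[rule_format, OF p] succ_inj[OF f[OF q] f[OF succ_lt[OF p]]] inj[OF q succ_lt[OF p]]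
        by metis
      show "f q = cycle_succ n (f p) \<longleftrightarrow> p = cycle_succ n q"
        using anti[rule_format, OF q] succ_inj[OF f[OF p] f[OF succ_lt[OF q]]] inj[OF p succ_lt[OF q]]
        by metis
    qed
    ultimately show ?thesis using succ p q f inj unfolding cycle_adj_iff by blast
  qed
  then show ?thesis using bij by (simp add: graph_aut_def cycle_verts_def)
qed

definition cycle_sub :: "nat \<Rightarrow> nat \<Rightarrow> nat \<Rightarrow> nat" where
  "cycle_sub n c x = (if c \<le> x then x - c else x + n - c)"

definition cycle_add :: "nat \<Rightarrow> nat \<Rightarrow> nat \<Rightarrow> nat" where
  "cycle_add n c x = (if x + c < n then x + c else x + c - n)"

definition cycle_refl :: "nat \<Rightarrow> nat \<Rightarrow> nat \<Rightarrow> nat" where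
  "cycle_refl n c x = (if x \<le> c then c - x else c + n - x)"

lemma graph_aut_cycle_sub: "c < n \<Longrightarrow> graph_aut (cycle_verts n) (cycle_adj n) (cycle_sub n c)"
  by (intro graph_aut_cycleI bij_betw_byWitness[where f' = "cycle_add n c"] disjI1)
    (auto simp: cycle_sub_def cycle_add_def cycle_succ_def)

lemma graph_aut_cycle_refl: "c < n \<Longrightarrow> graph_aut (cycle_verts n) (cycle_adj n) (cycle_refl n c)"
  by (intro graph_aut_cycleI bij_betw_byWitness[where f' = "cycle_refl n c"] disjI2)
    (auto simp: cycle_refl_def cycle_succ_def)

lemma cycle_dist_cycle_sub: "c < n \<Longrightarrow> x < n \<Longrightarrow> cycle_dist n 0 (cycle_sub n c x) = cycle_dist n c x"
  unfolding cycle_sub_def cycle_dist_def by (auto simp: Let_def min_def)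

lemma cycle_dist_cycle_refl: "c < n \<Longrightarrow> x < n \<Longrightarrow> cycle_dist n 0 (cycle_refl n c x) = cycle_dist n c x"
  unfolding cycle_refl_def cycle_dist_def by (auto simp: Let_def min_def)

lemma cycle_aut_to_origin:
  assumes "c < n" "x < n" "x' < n" "cycle_dist n 0 x' = cycle_dist n c x"
  shows "\<exists>f. graph_aut (cycle_verts n) (cycle_adj n) f \<and> f x = x' \<and>
             (\<forall>z<n. cycle_dist n 0 (f z) = cycle_dist n c z)"
proof -
  have "x' = cycle_sub n c x \<or> x' = cycle_refl n c x"
  proof (cases "c \<le> x")
    case True
    then have "min x' (n - x') = min (x - c) (n - (x - c))" using assms by (simp add: cycle_dist_def)
    then have "x' = x - c \<or> x' = n - (x - c)" using assms True by (auto simp: min_def split: if_splits)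
    then show ?thesis using True assms by (auto simp: cycle_sub_def cycle_refl_def)
  next
    case False
    then have "min x' (n - x') = min (c - x) (n - (c - x))" using assms by (simp add: cycle_dist_def)
    then have "x' = c - x \<or> x' = n - (c - x)" using assms False by (auto simp: min_def split: if_splits)
    then show ?thesis using False assms by (auto simp: cycle_sub_def cycle_refl_def)
  qed
  then show ?thesis
  proof
    assume "x' = cycle_sub n c x"
    then show ?thesis using assms graph_aut_cycle_sub cycle_dist_cycle_sub by blast
  next
    assume "x' = cycle_refl n c x"
    then show ?thesis using assms graph_aut_cycle_refl cycle_dist_cycle_refl by blast
  qed
qed

lemma cycle_dist_cycle_add: "c < n \<Longrightarrow> a \<le> n div 2 \<Longrightarrow> cycle_dist n c (cycle_add n c a) = a"
  unfolding cycle_add_def cycle_dist_def by (auto simp: Let_def min_def)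

section \<open>Tori\<close>

lemma graph_aut_box:
  assumes f: "graph_aut V1 E1 f" and g: "graph_aut V2 E2 g"
  shows "graph_aut (box_verts V1 V2) (box_adj E1 E2) (map_prod f g)"
proof -
  have "inj_on f V1" "inj_on g V2" using f g by (auto simp: graph_aut_def bij_betw_def)
  then have "box_adj E1 E2 (map_prod f g p) (map_prod f g q) \<longleftrightarrow> box_adj E1 E2 p q"
    if "p \<in> V1 \<times> V2" "q \<in> V1 \<times> V2" for p q
    using that f g unfolding graph_aut_def box_adj_def inj_on_def by (auto simp: mem_Times_iff)
  then show ?thesis
    using f g by (auto simp: graph_aut_def box_verts_def intro: bij_betw_map_prod)
qed

lemma graph_aut_box_swap: "graph_aut (box_verts V V) (box_adj E E) prod.swap"
  unfolding graph_aut_def box_verts_def box_adj_def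
  by (auto simp: bij_betw_def product_swap)

lemma mem_torus_verts: "p \<in> torus_verts n m \<longleftrightarrow> fst p < n \<and> snd p < m"
  unfolding torus_verts_def box_verts_def cycle_verts_def by (cases p) auto

lemma finite_torus_verts [simp]: "finite (torus_verts n m)"
  by (simp add: torus_verts_def box_verts_def cycle_verts_def)

lemma card_torus_verts: "card (torus_verts n m) = n * m"
  by (simp add: torus_verts_def box_verts_def cycle_verts_def card_cartesian_product)

lemma torus_adj_iff: "torus_adj n m p q \<longleftrightarrow>
    (fst p = fst q \<and> cycle_adj m (snd p) (snd q)) \<or> (snd p = snd q \<and> cycle_adj n (fst p) (fst q))"
  unfolding torus_adj_def box_adj_def by simp

definition torus_dist :: "nat \<Rightarrow> nat \<Rightarrow> nat \<times> nat \<Rightarrow> nat \<times> nat \<Rightarrow> nat" where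
  "torus_dist n m u v = cycle_dist n (fst u) (fst v) + cycle_dist m (snd u) (snd v)"

lemma torus_dist_commute: "torus_dist n m u v = torus_dist n m v u"
  unfolding torus_dist_def by (simp add: cycle_dist_commute)

lemma torus_dist_eq_0_iff:
  "u \<in> torus_verts n m \<Longrightarrow> v \<in> torus_verts n m \<Longrightarrow> torus_dist n m u v = 0 \<longleftrightarrow> u = v"
  unfolding torus_dist_def mem_torus_verts by (auto simp: cycle_dist_eq_0_iff prod_eq_iff)

lemma torus_dist_adj_le:
  "u \<in> torus_verts n m \<Longrightarrow> torus_adj n m p q \<Longrightarrow> torus_dist n m u p \<le> torus_dist n m u q + 1"
  unfolding torus_adj_iff torus_dist_def mem_torus_verts
  using cycle_dist_adj_le[of n "fst p" "fst q" "fst u"] cycle_dist_adj_le[of m "snd p" "snd q" "snd u"]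
  by auto

lemma torus_dist_descent:
  assumes "2 \<le> n" "2 \<le> m" "u \<in> torus_verts n m" "x \<in> torus_verts n m" "x \<noteq> u"
  shows "\<exists>y\<in>torus_verts n m. torus_adj n m x y \<and> torus_dist n m u y + 1 = torus_dist n m u x"
proof (cases "fst x = fst u")
  case False
  then obtain k where "k < n" "cycle_adj n (fst x) k" "cycle_dist n (fst u) k + 1 = cycle_dist n (fst u) (fst x)"
    using cycle_dist_descent[of n "fst u" "fst x"] assms by (auto simp: mem_torus_verts)
  then show ?thesis
    using assms by (intro bexI[of _ "(k, snd x)"]) (auto simp: torus_adj_iff torus_dist_def mem_torus_verts)
next
  case True
  then have "snd x \<noteq> snd u" using assms(5) by (simp add: prod_eq_iff)
  then obtain k where "k < m" "cycle_adj m (snd x) k" "cycle_dist m (snd u) k + 1 = cycle_dist m (snd u) (snd x)"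
    using cycle_dist_descent[of m "snd u" "snd x"] assms by (auto simp: mem_torus_verts)
  then show ?thesis
    using assms True by (intro bexI[of _ "(fst x, k)"]) (auto simp: torus_adj_iff torus_dist_def mem_torus_verts)
qed

lemma gdist_torus:
  assumes "2 \<le> n" "2 \<le> m" "u \<in> torus_verts n m" "v \<in> torus_verts n m"
  shows "gdist (torus_verts n m) (torus_adj n m) u v = torus_dist n m u v"
proof -
  have "gdist (torus_verts n m) (torus_adj n m) u v = torus_dist n m v u"
  proof (rule gdist_eq_potential)
    fix x assume x: "x \<in> torus_verts n m"
    show "torus_dist n m v x = 0 \<longleftrightarrow> x = v" using torus_dist_eq_0_iff[OF assms(4) x] by auto
    show "0 < torus_dist n m v x \<Longrightarrow>
        \<exists>y\<in>torus_verts n m. torus_adj n m x y \<and> torus_dist n m v y + 1 = torus_dist n m v x"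
      using torus_dist_descent[OF assms(1,2,4) x] torus_dist_eq_0_iff[OF assms(4) x] by auto
  qed (use assms torus_dist_adj_le in auto)
  then show ?thesis by (simp add: torus_dist_commute)
qed

lemma connected_torus:
  assumes "2 \<le> n" "2 \<le> m"
  shows "connected_graph (torus_verts n m) (torus_adj n m)"
  unfolding connected_graph_def reachable_def
proof (intro conjI ballI)
  have "(0, 0) \<in> torus_verts n m" using assms by (simp add: mem_torus_verts)
  then show "torus_verts n m \<noteq> {}" by blast
  fix u v assume u: "u \<in> torus_verts n m" and v: "v \<in> torus_verts n m"
  show "\<exists>xs. is_walk (torus_verts n m) (torus_adj n m) xs \<and> hd xs = u \<and> last xs = v"
  proof (rule walk_down_potential[where h = "torus_dist n m v", THEN exE])
    fix x assume x: "x \<in> torus_verts n m"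
    show "x = v" if "torus_dist n m v x = 0" using that torus_dist_eq_0_iff[OF v x] by simp
    show "\<exists>y\<in>torus_verts n m. torus_adj n m x y \<and> torus_dist n m v y + 1 = torus_dist n m v x"
      if "0 < torus_dist n m v x"
      using that torus_dist_descent[OF assms v x] torus_dist_eq_0_iff[OF v x] by auto
  qed (use u in blast)+
qed

lemma torus_coordinate_dists_attained:
  assumes "u \<in> torus_verts n m" "a \<le> n div 2" "b \<le> m div 2"
  shows "\<exists>x\<in>torus_verts n m. cycle_dist n (fst u) (fst x) = a \<and> cycle_dist m (snd u) (snd x) = b"
proof (intro bexI conjI)
  let ?x = "(cycle_add n (fst u) a, cycle_add m (snd u) b)"
  show "cycle_dist n (fst u) (fst ?x) = a" "cycle_dist m (snd u) (snd ?x) = b"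
    using assms by (simp_all add: mem_torus_verts cycle_dist_cycle_add)
  show "?x \<in> torus_verts n m" using assms by (auto simp: mem_torus_verts cycle_add_def)
qed

lemma torus_aut_to_origin:
  assumes "u \<in> torus_verts n m" "y \<in> torus_verts n m" "y0 \<in> torus_verts n m"
    and "cycle_dist n 0 (fst y0) = cycle_dist n (fst u) (fst y)"
    and "cycle_dist m 0 (snd y0) = cycle_dist m (snd u) (snd y)"
  shows "\<exists>s. graph_aut (torus_verts n m) (torus_adj n m) s \<and> s y = y0 \<and>
           (\<forall>x\<in>torus_verts n m. cycle_dist n 0 (fst (s x)) = cycle_dist n (fst u) (fst x) \<and>
                                 cycle_dist m 0 (snd (s x)) = cycle_dist m (snd u) (snd x))"
proof -
  obtain f where f: "graph_aut (cycle_verts n) (cycle_adj n) f" "f (fst y) = fst y0"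
    "\<forall>z<n. cycle_dist n 0 (f z) = cycle_dist n (fst u) z"
    using cycle_aut_to_origin[of "fst u" n "fst y" "fst y0"] assms by (auto simp: mem_torus_verts)
  obtain g where g: "graph_aut (cycle_verts m) (cycle_adj m) g" "g (snd y) = snd y0"
    "\<forall>z<m. cycle_dist m 0 (g z) = cycle_dist m (snd u) z"
    using cycle_aut_to_origin[of "snd u" m "snd y" "snd y0"] assms by (auto simp: mem_torus_verts)
  have "graph_aut (torus_verts n m) (torus_adj n m) (map_prod f g)"
    unfolding torus_verts_def torus_adj_def using f(1) g(1) by (rule graph_aut_box)
  then show ?thesis
    using f g by (intro exI[of _ "map_prod f g"]) (auto simp: mem_torus_verts prod_eq_iff)
qed

lemma radix_eq_iff:
  fixes a b a' b' K :: nat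
  assumes "a < K" "a' < K"
  shows "a + K * b = a' + K * b' \<longleftrightarrow> a = a' \<and> b = b'"
proof
  assume eq: "a + K * b = a' + K * b'"
  then have "(a + K * b) mod K = (a' + K * b') mod K" by simp
  then have "a = a'" using assms by simp
  with eq assms show "a = a' \<and> b = b'" by simp
qed simp

definition torus_label :: "nat \<Rightarrow> nat \<Rightarrow> nat \<times> nat \<Rightarrow> nat \<times> nat \<Rightarrow> nat" where
  "torus_label n m u x =
     1 + cycle_dist n (fst u) (fst x) + (n div 2 + 1) * cycle_dist m (snd u) (snd x)"

lemma torus_label_image:
  assumes u: "u \<in> torus_verts n m"
  shows "torus_label n m u ` torus_verts n m = {1..(n div 2 + 1) * (m div 2 + 1)}"
proof (intro equalityI subsetI)
  let ?K = "n div 2 + 1"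
  fix i assume "i \<in> torus_label n m u ` torus_verts n m"
  then obtain x where x: "x \<in> torus_verts n m" "i = torus_label n m u x" by blast
  then have a: "cycle_dist n (fst u) (fst x) < ?K" and b: "cycle_dist m (snd u) (snd x) \<le> m div 2"
    using u cycle_dist_le_half[of "fst u" n "fst x"] cycle_dist_le_half[of "snd u" m "snd x"]
    by (auto simp: mem_torus_verts)
  have "torus_label n m u x \<le> ?K * (cycle_dist m (snd u) (snd x) + 1)"
    using a by (simp add: torus_label_def)
  also have "\<dots> \<le> ?K * (m div 2 + 1)" using b by (intro mult_le_mono2) simp
  finally show "i \<in> {1..?K * (m div 2 + 1)}" using x by (simp add: torus_label_def)
next
  let ?K = "n div 2 + 1"
  fix i assume i: "i \<in> {1..?K * (m div 2 + 1)}"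
  have "(i - 1) mod ?K \<le> n div 2" by (simp add: less_Suc_eq_le)
  have "i - 1 < ?K * (m div 2 + 1)" using i by (simp only: atLeastAtMost_iff) linarith
  then have "i - 1 < (m div 2 + 1) * ?K" by (simp only: mult.commute)
  then have "(i - 1) div ?K < m div 2 + 1" by (rule less_mult_imp_div_less)
  then obtain x where "x \<in> torus_verts n m" "cycle_dist n (fst u) (fst x) = (i - 1) mod ?K"
    "cycle_dist m (snd u) (snd x) = (i - 1) div ?K"
    using torus_coordinate_dists_attained[OF u \<open>(i - 1) mod ?K \<le> n div 2\<close>, of "(i - 1) div ?K"]
    by auto
  moreover from this have "torus_label n m u x = i"
    using i by (simp only: torus_label_def add.assoc mod_mult_div_eq) simp
  ultimately show "i \<in> torus_label n m u ` torus_verts n m" by blast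
qed

lemma torus_label_eq_1_iff:
  "u \<in> torus_verts n m \<Longrightarrow> x \<in> torus_verts n m \<Longrightarrow> torus_label n m u x = 1 \<longleftrightarrow> x = u"
  using torus_dist_eq_0_iff[of u n m x] by (auto simp: torus_label_def torus_dist_def)

lemma torus_label_eq_imp_aut:
  assumes u: "u \<in> torus_verts n m" and y: "y \<in> torus_verts n m" and y0: "y0 \<in> torus_verts n m"
    and eq: "torus_label n m u y = torus_label n m (0, 0) y0"
  shows "\<exists>s. graph_aut (torus_verts n m) (torus_adj n m) s \<and> s y = y0 \<and>
           (\<forall>x\<in>torus_verts n m. torus_label n m (0, 0) (s x) = torus_label n m u x)"
proof -
  have "cycle_dist n (fst u) (fst y) < n div 2 + 1" and "cycle_dist n 0 (fst y0) < n div 2 + 1"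
    using u y y0 cycle_dist_le_half[of "fst u" n "fst y"] cycle_dist_le_half[of 0 n "fst y0"]
    by (auto simp: mem_torus_verts)
  moreover have "cycle_dist n (fst u) (fst y) + (n div 2 + 1) * cycle_dist m (snd u) (snd y) =
      cycle_dist n 0 (fst y0) + (n div 2 + 1) * cycle_dist m 0 (snd y0)"
    using eq unfolding torus_label_def by (simp only: add.assoc add_left_cancel fst_conv snd_conv)
  ultimately have "cycle_dist n (fst u) (fst y) = cycle_dist n 0 (fst y0) \<and>
      cycle_dist m (snd u) (snd y) = cycle_dist m 0 (snd y0)"
    using radix_eq_iff by blast
  then obtain s where "graph_aut (torus_verts n m) (torus_adj n m) s" "s y = y0"
    "\<forall>x\<in>torus_verts n m. cycle_dist n 0 (fst (s x)) = cycle_dist n (fst u) (fst x) \<and>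
                         cycle_dist m 0 (snd (s x)) = cycle_dist m (snd u) (snd x)"
    using torus_aut_to_origin[OF u y y0] by auto
  then show ?thesis by (intro exI[of _ s]) (simp add: torus_label_def)
qed

lemma highly_regular_torus:
  assumes "2 \<le> n" "n \<le> m" "(n, m) \<noteq> (2, 2)"
  shows "highly_regular (torus_verts n m) (torus_adj n m)"
proof (rule highly_regular_by_labelling[where lab = "torus_label n m" and w = "(0, 0)"])
  let ?K = "n div 2 + 1"
  have "m div 2 + 1 < m" "?K \<le> n" using assms by auto
  then have "?K * (m div 2 + 1) < ?K * m" "?K * m \<le> n * m"
    by (simp_all only: mult_less_cancel1 mult_le_mono1) simp
  then show "?K * (m div 2 + 1) < card (torus_verts n m)"
    unfolding card_torus_verts by (rule less_le_trans)
  show "2 \<le> ?K * (m div 2 + 1)" using assms by simp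
  show "finite (torus_verts n m)" by simp
  show "(0, 0) \<in> torus_verts n m" using assms by (simp add: mem_torus_verts)
next
  fix u assume "u \<in> torus_verts n m"
  then show "torus_label n m u ` torus_verts n m = {1..(n div 2 + 1) * (m div 2 + 1)}"
    by (rule torus_label_image)
next
  fix u x assume "u \<in> torus_verts n m" "x \<in> torus_verts n m"
  then show "torus_label n m u x = 1 \<longleftrightarrow> x = u" by (rule torus_label_eq_1_iff)
next
  fix u y y0 assume "u \<in> torus_verts n m" "y \<in> torus_verts n m" "y0 \<in> torus_verts n m"
    "torus_label n m u y = torus_label n m (0, 0) y0"
  then show "\<exists>s. graph_aut (torus_verts n m) (torus_adj n m) s \<and> s y = y0 \<and>
      (\<forall>x\<in>torus_verts n m. torus_label n m (0, 0) (s x) = torus_label n m u x)"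
    by (rule torus_label_eq_imp_aut)
qed

lemma cycle_dist_2_le_1: "i < 2 \<Longrightarrow> j < 2 \<Longrightarrow> cycle_dist 2 i j \<le> 1"
  using cycle_dist_le_half[of i 2 j] by simp

lemma torus_2_2_dist_eq_imp_aut:
  assumes u: "u \<in> torus_verts 2 2" and y: "y \<in> torus_verts 2 2" and y0: "y0 \<in> torus_verts 2 2"
    and eq: "torus_dist 2 2 u y = torus_dist 2 2 (0, 0) y0"
  shows "\<exists>s. graph_aut (torus_verts 2 2) (torus_adj 2 2) s \<and> s y = y0 \<and>
           (\<forall>x\<in>torus_verts 2 2. torus_dist 2 2 (0, 0) (s x) = torus_dist 2 2 u x)"
proof -
  let ?a = "cycle_dist 2 (fst u) (fst y)" and ?b = "cycle_dist 2 (snd u) (snd y)"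
  let ?a' = "cycle_dist 2 0 (fst y0)" and ?b' = "cycle_dist 2 0 (snd y0)"
  have "?a \<le> 1" "?b \<le> 1" "?a' \<le> 1" "?b' \<le> 1" "?a + ?b = ?a' + ?b'"
    using eq u y y0 cycle_dist_2_le_1 by (simp_all add: torus_dist_def mem_torus_verts)
  then consider "?a' = ?a" "?b' = ?b" | "?b' = ?a" "?a' = ?b" by linarith
  then show ?thesis
  proof cases
    case 1
    then obtain s where s: "graph_aut (torus_verts 2 2) (torus_adj 2 2) s" "s y = y0"
      "\<forall>x\<in>torus_verts 2 2. cycle_dist 2 0 (fst (s x)) = cycle_dist 2 (fst u) (fst x) \<and>
                           cycle_dist 2 0 (snd (s x)) = cycle_dist 2 (snd u) (snd x)"
      using torus_aut_to_origin[OF u y y0] by blast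
    then show ?thesis by (intro exI[of _ s]) (simp add: torus_dist_def)
  next
    case 2
    have "prod.swap y0 \<in> torus_verts 2 2" using y0 by (simp add: mem_torus_verts)
    then obtain s where s: "graph_aut (torus_verts 2 2) (torus_adj 2 2) s" "s y = prod.swap y0"
      "\<forall>x\<in>torus_verts 2 2. cycle_dist 2 0 (fst (s x)) = cycle_dist 2 (fst u) (fst x) \<and>
                           cycle_dist 2 0 (snd (s x)) = cycle_dist 2 (snd u) (snd x)"
      using torus_aut_to_origin[OF u y] 2 by fastforce
    have "graph_aut (torus_verts 2 2) (torus_adj 2 2) prod.swap"
      unfolding torus_verts_def torus_adj_def by (rule graph_aut_box_swap)
    with s show ?thesis
      by (intro exI[of _ "prod.swap \<circ> s"]) (auto simp: graph_aut_comp torus_dist_def)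
  qed
qed

lemma highly_regular_torus_2_2: "highly_regular (torus_verts 2 2) (torus_adj 2 2)"
proof (rule highly_regular_by_labelling[where lab = "\<lambda>u x. 1 + torus_dist 2 2 u x" and M = 3
      and w = "(0, 0)"])
  show "3 < card (torus_verts 2 2)" "(0, 0) \<in> torus_verts 2 2"
    by (simp_all add: card_torus_verts mem_torus_verts)
next
  fix u assume u: "u \<in> torus_verts 2 2"
  show "(\<lambda>x. 1 + torus_dist 2 2 u x) ` torus_verts 2 2 = {1..3}"
  proof (intro equalityI subsetI)
    fix i assume "i \<in> (\<lambda>x. 1 + torus_dist 2 2 u x) ` torus_verts 2 2"
    then obtain x where "x \<in> torus_verts 2 2" "i = 1 + torus_dist 2 2 u x" by blast
    then show "i \<in> {1..3}"
      using u cycle_dist_2_le_1[of "fst u" "fst x"] cycle_dist_2_le_1[of "snd u" "snd x"]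
      by (simp add: torus_dist_def mem_torus_verts)
  next
    fix i :: nat assume "i \<in> {1..3}"
    then obtain a b where "a \<le> 1" "b \<le> 1" "i = 1 + a + b"
      by (intro that[of "min (i - 1) 1" "i - 1 - min (i - 1) 1"]) auto
    with torus_coordinate_dists_attained[OF u, of a b]
    show "i \<in> (\<lambda>x. 1 + torus_dist 2 2 u x) ` torus_verts 2 2"
      by (force simp: torus_dist_def)
  qed
qed (use torus_dist_eq_0_iff torus_2_2_dist_eq_imp_aut in auto)

section \<open>Failure of distance-regularity\<close>

lemma distance_regularD:
  assumes "distance_regular V E" "u \<in> V" "v \<in> V" "u' \<in> V" "v' \<in> V"
    and "gdist V E u v = gdist V E u' v'"
  shows "card {w\<in>V. E v w \<and> gdist V E u w + 1 = gdist V E u v}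
           = card {w\<in>V. E v' w \<and> gdist V E u' w + 1 = gdist V E u' v'}"
    and "card {w\<in>V. E v w \<and> gdist V E u w = gdist V E u v}
           = card {w\<in>V. E v' w \<and> gdist V E u' w = gdist V E u' v'}"
  using assms unfolding distance_regular_def by blast+

lemma distance_regular_torus_counts:
  assumes dr: "distance_regular (torus_verts n m) (torus_adj n m)" and "2 \<le> n" "2 \<le> m"
    and u: "u \<in> torus_verts n m" and v: "v \<in> torus_verts n m" and v': "v' \<in> torus_verts n m"
    and eq: "torus_dist n m u v = torus_dist n m u v'"
  shows "card {w \<in> torus_verts n m. torus_adj n m v w \<and> torus_dist n m u w + 1 = torus_dist n m u v}
       = card {w \<in> torus_verts n m. torus_adj n m v' w \<and> torus_dist n m u w + 1 = torus_dist n m u v'}"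
    and "card {w \<in> torus_verts n m. torus_adj n m v w \<and> torus_dist n m u w = torus_dist n m u v}
       = card {w \<in> torus_verts n m. torus_adj n m v' w \<and> torus_dist n m u w = torus_dist n m u v'}"
proof -
  let ?V = "torus_verts n m" and ?E = "torus_adj n m"
  have gdist: "gdist ?V ?E u x = torus_dist n m u x" if "x \<in> ?V" for x
    using gdist_torus[OF assms(2,3) u that] .
  have Collect_gdist: "{w \<in> ?V. P w (gdist ?V ?E u w)} = {w \<in> ?V. P w (torus_dist n m u w)}" for P
    using gdist by auto
  have "gdist ?V ?E u v = gdist ?V ?E u v'" using gdist v v' eq by simp
  note counts = distance_regularD[OF dr u v u v' this]
  show "card {w \<in> ?V. ?E v w \<and> torus_dist n m u w + 1 = torus_dist n m u v}
      = card {w \<in> ?V. ?E v' w \<and> torus_dist n m u w + 1 = torus_dist n m u v'}"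
    using counts(1) Collect_gdist[of "\<lambda>w d. ?E v w \<and> d + 1 = torus_dist n m u v"]
      Collect_gdist[of "\<lambda>w d. ?E v' w \<and> d + 1 = torus_dist n m u v'"] gdist v v' by simp
  show "card {w \<in> ?V. ?E v w \<and> torus_dist n m u w = torus_dist n m u v}
      = card {w \<in> ?V. ?E v' w \<and> torus_dist n m u w = torus_dist n m u v'}"
    using counts(2) Collect_gdist[of "\<lambda>w d. ?E v w \<and> d = torus_dist n m u v"]
      Collect_gdist[of "\<lambda>w d. ?E v' w \<and> d = torus_dist n m u v'"] gdist v v' by simp
qed

lemma torus_neighbours_closer_0_2:
  assumes "2 \<le> n" "5 \<le> m"
  shows "{w \<in> torus_verts n m. torus_adj n m (0, 2) w \<and> torus_dist n m (0, 0) w + 1 = 2} = {(0, 1)}"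
proof (intro equalityI subsetI)
  fix w assume "w \<in> {w \<in> torus_verts n m. torus_adj n m (0, 2) w \<and> torus_dist n m (0, 0) w + 1 = 2}"
  then have w: "torus_adj n m (0, 2) w" "torus_dist n m (0, 0) w = 1" by auto
  then consider "fst w = 0" "snd w = 1 \<or> snd w = 3" | "snd w = 2"
    using assms unfolding torus_adj_iff cycle_adj_iff cycle_succ_def by (auto split: if_splits)
  then show "w \<in> {(0, 1)}"
  proof cases
    case 1
    have "cycle_dist m 0 3 \<noteq> 1" using assms by (simp add: cycle_dist_def)
    then show ?thesis using w 1 by (auto simp: torus_dist_def prod_eq_iff)
  next
    case 2
    have "cycle_dist m 0 2 = 2" using assms by (simp add: cycle_dist_def)
    then show ?thesis using w 2 by (simp add: torus_dist_def)
  qed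
next
  fix w assume "w \<in> {(0::nat, 1::nat)}"
  moreover have "cycle_adj m 2 1" using assms by (simp add: cycle_adj_iff cycle_succ_def)
  ultimately show "w \<in> {w \<in> torus_verts n m. torus_adj n m (0, 2) w \<and> torus_dist n m (0, 0) w + 1 = 2}"
    using assms by (simp add: mem_torus_verts torus_adj_iff torus_dist_def cycle_dist_def)
qed

lemma torus_neighbours_closer_1_1:
  assumes "2 \<le> n" "5 \<le> m"
  shows "{w \<in> torus_verts n m. torus_adj n m (1, 1) w \<and> torus_dist n m (0, 0) w + 1 = 2}
       = {(0, 1), (1, 0)}"
proof (intro equalityI subsetI)
  fix w assume "w \<in> {w \<in> torus_verts n m. torus_adj n m (1, 1) w \<and> torus_dist n m (0, 0) w + 1 = 2}"
  then have w: "w \<in> torus_verts n m" "torus_adj n m (1, 1) w" "torus_dist n m (0, 0) w = 1" by auto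
  then consider "fst w = 1" "snd w = 0 \<or> snd w = 2" | "snd w = 1" "fst w = 0 \<or> (fst w = 2 \<and> 3 \<le> n)"
    using assms unfolding torus_adj_iff cycle_adj_iff cycle_succ_def mem_torus_verts
    by (auto split: if_splits)
  then show "w \<in> {(0, 1), (1, 0)}"
  proof cases
    case 1
    have "cycle_dist n 0 1 = 1" "cycle_dist m 0 2 = 2" using assms by (simp_all add: cycle_dist_def)
    then show ?thesis using w 1 by (auto simp: torus_dist_def prod_eq_iff)
  next
    case 2
    have "cycle_dist m 0 1 = 1" "3 \<le> n \<Longrightarrow> cycle_dist n 0 2 \<noteq> 0" using assms
      by (simp_all add: cycle_dist_def)
    then show ?thesis using w 2 by (auto simp: torus_dist_def prod_eq_iff)
  qed
next
  fix w assume "w \<in> {(0::nat, 1::nat), (1, 0)}"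
  moreover have "cycle_adj m 1 0" "cycle_adj n 1 0" using assms by (auto simp: cycle_adj_iff cycle_succ_def)
  ultimately show "w \<in> {w \<in> torus_verts n m. torus_adj n m (1, 1) w \<and> torus_dist n m (0, 0) w + 1 = 2}"
    using assms by (auto simp: mem_torus_verts torus_adj_iff torus_dist_def cycle_dist_def)
qed

lemma not_distance_regular_torus_large:
  assumes "2 \<le> n" "5 \<le> m"
  shows "\<not> distance_regular (torus_verts n m) (torus_adj n m)"
proof
  assume dr: "distance_regular (torus_verts n m) (torus_adj n m)"
  have V: "(0, 0) \<in> torus_verts n m" "(0, 2) \<in> torus_verts n m" "(1, 1) \<in> torus_verts n m"
    using assms by (simp_all add: mem_torus_verts)
  have dist: "torus_dist n m (0, 0) (0, 2) = 2" "torus_dist n m (0, 0) (1, 1) = 2"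
    using assms by (simp_all add: torus_dist_def cycle_dist_def)
  have "card {w \<in> torus_verts n m. torus_adj n m (0, 2) w \<and> torus_dist n m (0, 0) w + 1 = 2}
      = card {w \<in> torus_verts n m. torus_adj n m (1, 1) w \<and> torus_dist n m (0, 0) w + 1 = 2}"
    using distance_regular_torus_counts(1)[OF dr assms(1) _ V] assms dist by simp
  then show False
    unfolding torus_neighbours_closer_0_2[OF assms] torus_neighbours_closer_1_1[OF assms] by simp
qed

lemma torus_verts_2_3: "torus_verts 2 3 = {0, 1} \<times> {0, 1, 2}"
  unfolding torus_verts_def box_verts_def cycle_verts_def
  by (simp add: lessThan_nat_numeral lessThan_Suc insert_commute)

lemma torus_verts_3_4: "torus_verts 3 4 = {0, 1, 2} \<times> {0, 1, 2, 3}"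
  unfolding torus_verts_def box_verts_def cycle_verts_def
  by (simp add: lessThan_nat_numeral lessThan_Suc insert_commute)

lemma torus_2_3_neighbours_at_distance_1:
  "{w \<in> torus_verts 2 3. torus_adj 2 3 (1, 0) w \<and> torus_dist 2 3 (0, 0) w = 1} = {}"
  "(0, 2) \<in> {w \<in> torus_verts 2 3. torus_adj 2 3 (0, 1) w \<and> torus_dist 2 3 (0, 0) w = 1}"
  by (auto simp: torus_verts_2_3 torus_adj_iff cycle_adj_iff cycle_succ_def torus_dist_def
      cycle_dist_def)

lemma torus_3_4_neighbours_at_distance_1:
  "(2, 0) \<in> {w \<in> torus_verts 3 4. torus_adj 3 4 (1, 0) w \<and> torus_dist 3 4 (0, 0) w = 1}"
  "{w \<in> torus_verts 3 4. torus_adj 3 4 (0, 1) w \<and> torus_dist 3 4 (0, 0) w = 1} = {}"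
  by (auto simp: torus_verts_3_4 torus_adj_iff cycle_adj_iff cycle_succ_def torus_dist_def
      cycle_dist_def)

lemma not_distance_regular_torus_small:
  assumes "(n, m) = (2, 3) \<or> (n, m) = (3, 4)"
  shows "\<not> distance_regular (torus_verts n m) (torus_adj n m)"
proof
  assume dr: "distance_regular (torus_verts n m) (torus_adj n m)"
  have n: "2 \<le> n" and m: "2 \<le> m" using assms by auto
  have V: "(0, 0) \<in> torus_verts n m" "(1, 0) \<in> torus_verts n m" "(0, 1) \<in> torus_verts n m"
    using n m by (simp_all add: mem_torus_verts)
  have "torus_dist n m (0, 0) (1, 0) = 1" "torus_dist n m (0, 0) (0, 1) = 1"
    using n m by (simp_all add: torus_dist_def cycle_dist_def)
  then have counts: "card {w \<in> torus_verts n m. torus_adj n m (1, 0) w \<and> torus_dist n m (0, 0) w = 1}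
      = card {w \<in> torus_verts n m. torus_adj n m (0, 1) w \<and> torus_dist n m (0, 0) w = 1}"
    using distance_regular_torus_counts(2)[OF dr n m V] by simp
  from assms show False
  proof (elim disjE)
    assume "(n, m) = (2, 3)"
    then have "n = 2" "m = 3" by simp_all
    let ?S = "{w \<in> torus_verts 2 3. torus_adj 2 3 (0, 1) w \<and> torus_dist 2 3 (0, 0) w = 1}"
    have "?S \<noteq> {}" using torus_2_3_neighbours_at_distance_1(2) by (metis empty_iff)
    then have "0 < card ?S" by (simp add: card_gt_0_iff)
    moreover have "card ?S = card ({} :: (nat \<times> nat) set)"
      using counts[unfolded \<open>n = 2\<close> \<open>m = 3\<close> torus_2_3_neighbours_at_distance_1(1)] by (rule sym)
    ultimately show False by (simp only: card.empty)
  next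
    assume "(n, m) = (3, 4)"
    then have "n = 3" "m = 4" by simp_all
    let ?S = "{w \<in> torus_verts 3 4. torus_adj 3 4 (1, 0) w \<and> torus_dist 3 4 (0, 0) w = 1}"
    have "?S \<noteq> {}" using torus_3_4_neighbours_at_distance_1(1) by (metis empty_iff)
    then have "0 < card ?S" by (simp add: card_gt_0_iff)
    moreover have "card ?S = card ({} :: (nat \<times> nat) set)"
      using counts[unfolded \<open>n = 3\<close> \<open>m = 4\<close> torus_3_4_neighbours_at_distance_1(2)] .
    ultimately show False by (simp only: card.empty)
  qed
qed

theorem propositionA1:
  fixes n m :: nat
  assumes "2 \<le> n" and "n \<le> m"
  shows "connected_graph (torus_verts n m) (torus_adj n m) \<and>
         highly_regular (torus_verts n m) (torus_adj n m) \<and>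
         ((n, m) \<notin> {(2,2), (2,4), (3,3), (4,4)} \<longrightarrow>
            \<not> distance_regular (torus_verts n m) (torus_adj n m))"
proof -
  have m: "2 \<le> m" using assms by simp
  have highly_regular: "highly_regular (torus_verts n m) (torus_adj n m)"
  proof (cases "(n, m) = (2, 2)")
    case True
    then show ?thesis using highly_regular_torus_2_2 by simp
  next
    case False
    then show ?thesis using highly_regular_torus[OF assms] by blast
  qed
  have "\<not> distance_regular (torus_verts n m) (torus_adj n m)"
    if exceptions: "(n, m) \<notin> {(2,2), (2,4), (3,3), (4,4)}"
  proof (cases "5 \<le> m")
    case True
    then show ?thesis using not_distance_regular_torus_large[OF assms(1)] by blast
  next
    case False
    then have "(n, m) = (2, 3) \<or> (n, m) = (3, 4)" using exceptions assms by auto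
    then show ?thesis by (rule not_distance_regular_torus_small)
  qed
  with connected_torus[OF assms(1) m] highly_regular show ?thesis by blast
qed

end
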